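(* For real $\alpha\ne0$ and real $\beta$, let $F_{\alpha,\beta}(x)=\bigl(1+\frac{\alpha}{x}\bigr)^{x+\beta}$, defined for $x>\max\{0,-\alpha\}$ or $x<\min\{0,-\alpha\}$. Then: (1) For $\alpha<0$: $F_{\alpha,\beta}\in\mathcal{C_L}[(-\alpha,\infty)]$ if and only if $\beta\le\alpha$; and $1/F_{\alpha,\beta}\in\mathcal{C_L}[(-\alpha,\infty)]$ if and only if $2\beta\ge\alpha$. (2) For $\alpha>0$: $F_{\alpha,\beta}\in\mathcal{C_L}[(0,\infty)]$ if and only if $2\beta\ge\alpha$; and $1/F_{\alpha,\beta}\in\mathcal{C_L}[(0,\infty)]$ if and only if $\beta\le0$. (3) For $\alpha<0$: $F_{\alpha,\beta}\in\mathcal{A_L}[(-\infty,0)]$ if and only if $\beta\ge0$; and $1/F_{\alpha,\beta}\in\mathcal{A_L}[(-\infty,0)]$ if and only if $2\beta\le\alpha$. (4) For $\alpha>0$: $F_{\alpha,\beta}\in\mathcal{A_L}[(-\infty,-\alpha)]$ if and only if $2\beta\le\alpha$; and $1/F_{\alpha,\beta}\in\mathcal{A_L}[(-\infty,-\alpha)]$ if and only if $\beta\ge\alpha$.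
   Context: For an interval $I$: a positive function $f$ is logarithmically completely monotonic on $I$ if it has derivatives of all orders on $I$ and $(-1)^k[\ln f(x)]^{(k)}\ge0$ for all $x\in I$ and all positive integers $k$; the set of such functions is $\mathcal{C_L}[I]$. A positive function $f$ is logarithmically absolutely monotonic on $I$ if it has derivatives of all orders on $I$ and $[\ln f(x)]^{(k)}\ge0$ for all $x\in I$ and all positive integers $k$; the set of such functions is $\mathcal{A_L}[I]$. *)

theory Defs
  imports "HOL-Analysis.Analysis"
begin

text \<open>Derivatives of all orders on I: every iterated derivative is differentiable at
every point of I (the intervals used are open, so this is local to I).\<close>

definition smooth_on :: "(real \<Rightarrow> real) \<Rightarrow> real set \<Rightarrow> bool" where
  "smooth_on f I \<longleftrightarrow> (\<forall>k. \<forall>x\<in>I. ((deriv ^^ k) f) differentiable (at x))"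

definition log_completely_monotonic_on :: "(real \<Rightarrow> real) \<Rightarrow> real set \<Rightarrow> bool" where
  "log_completely_monotonic_on f I \<longleftrightarrow>
     (\<forall>x\<in>I. f x > 0) \<and> smooth_on f I \<and>
     (\<forall>k::nat. k \<ge> 1 \<longrightarrow> (\<forall>x\<in>I. (-1) ^ k * (deriv ^^ k) (\<lambda>y. ln (f y)) x \<ge> 0))"

definition log_absolutely_monotonic_on :: "(real \<Rightarrow> real) \<Rightarrow> real set \<Rightarrow> bool" where
  "log_absolutely_monotonic_on f I \<longleftrightarrow>
     (\<forall>x\<in>I. f x > 0) \<and> smooth_on f I \<and>
     (\<forall>k::nat. k \<ge> 1 \<longrightarrow> (\<forall>x\<in>I. (deriv ^^ k) (\<lambda>y. ln (f y)) x \<ge> 0))"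

text \<open>F_{alpha,beta}(x) = (1 + alpha/x)^(x+beta); on the domains considered 1 + alpha/x > 0.\<close>
definition F :: "real \<Rightarrow> real \<Rightarrow> real \<Rightarrow> real" where
  "F \<alpha> \<beta> x = (1 + \<alpha> / x) powr (x + \<beta>)"

end

theory Submission
  imports Defs
begin

text \<open>
  Put \<open>g x = ln (F a b x) = (x + b) ln (1 + a / x)\<close>. By the Leibniz rule its \<open>k\<close>-th derivative
  is \<open>(x + b) L\<^sub>k + k L\<^sub>k\<^sub>-\<^sub>1\<close>, where \<open>L\<^sub>j\<close> is the explicit \<open>j\<close>-th derivative of \<open>ln (1 + a / x)\<close>.
  The identities \<open>F a b x = 1 / F (-a) (b - a) (x + a)\<close> and \<open>F a b (-x) = 1 / F (-a) (-b) x\<close>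
  reduce all eight equivalences to the logarithmic complete monotonicity of \<open>F a b\<close> and \<open>1 / F a b\<close>
  on \<open>(0, \<infinity>)\<close> for \<open>a > 0\<close>. There the second derivative of \<open>g\<close> is
  \<open>a ((2 b - a) x + a b) / (x (x + a))\<^sup>2\<close>, and its sign for all \<open>x > 0\<close> forces the conditions
  on \<open>b\<close>. Conversely, for \<open>k \<ge> 2\<close> the quantity \<open>(x (x + a))\<^sup>k g\<^sup>(\<^sup>k\<^sup>)\<close> is, up to the factor
  \<open>(-1)\<^sup>k (k - 2)!\<close>, a polynomial in \<open>p = x\<close> and \<open>q = x + a\<close> that is affine and increasing in
  \<open>b\<close>; its signs at \<open>b = 0\<close> and \<open>b = a / 2\<close> follow from bounds on the mixed power sum
  \<open>\<Sum>i<m. q\<^sup>i\<^sup>+\<^sup>1 p\<^sup>m\<^sup>-\<^sup>i\<close>. The first derivative is handled by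
  \<open>1 - 1 / y \<le> ln y \<le> (y - 1 / y) / 2\<close> for \<open>y \<ge> 1\<close>. Finally, \<open>F\<close> and \<open>1 / F\<close> are smooth
  because they lie in an algebra of functions that is closed under differentiation.
\<close>

section \<open>Smoothness via algebras closed under differentiation\<close>

lemma iterated_deriv_eqI:
  assumes "open S" and "\<And>x. x \<in> S \<Longrightarrow> f x = D 0 x"
    and "\<And>k x. x \<in> S \<Longrightarrow> (D k has_real_derivative D (Suc k) x) (at x)"
    and "x \<in> S"
  shows "(deriv ^^ k) f x = D k x"
  using \<open>x \<in> S\<close>
proof (induction k arbitrary: x)
  case 0
  then show ?case using assms(2) by simp
next
  case (Suc k)
  have "eventually (\<lambda>y. (deriv ^^ k) f y = D k y) (nhds x)"
    using eventually_nhds_in_open[OF \<open>open S\<close> Suc.prems] by (rule eventually_mono) (use Suc.IH in auto)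
  then have "deriv ((deriv ^^ k) f) x = deriv (D k) x" by (rule deriv_cong_ev) simp
  then show ?case using DERIV_imp_deriv[OF assms(3)[OF Suc.prems]] by simp
qed

lemma smooth_onI_derivative_closed:
  assumes "open S" and "f \<in> C"
    and closed: "\<And>g. g \<in> C \<Longrightarrow> \<exists>g'\<in>C. \<forall>x\<in>S. (g has_real_derivative g' x) (at x)"
  shows "smooth_on f S"
proof -
  have "\<exists>g\<in>C. \<forall>x\<in>S. ((deriv ^^ k) f has_real_derivative g x) (at x)" for k
  proof (induction k)
    case 0
    then show ?case using closed[OF \<open>f \<in> C\<close>] by simp
  next
    case (Suc k)
    then obtain g where "g \<in> C" and g: "\<forall>x\<in>S. ((deriv ^^ k) f has_real_derivative g x) (at x)"
      by blast
    obtain g' where "g' \<in> C" and g': "\<forall>x\<in>S. (g has_real_derivative g' x) (at x)"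
      using closed[OF \<open>g \<in> C\<close>] by blast
    have "((deriv ^^ Suc k) f has_real_derivative g' x) (at x)" if "x \<in> S" for x
    proof (rule has_field_derivative_transform_within_open[OF _ \<open>open S\<close> that])
      show "(g has_real_derivative g' x) (at x)" using g' that by blast
      show "g y = (deriv ^^ Suc k) f y" if "y \<in> S" for y
        using g that by (simp add: DERIV_imp_deriv[symmetric])
    qed
    then show ?case using \<open>g' \<in> C\<close> by blast
  qed
  then show ?thesis unfolding smooth_on_def real_differentiable_def by blast
qed

inductive_set function_algebra :: "(real \<Rightarrow> real) set \<Rightarrow> (real \<Rightarrow> real) set"
  for G :: "(real \<Rightarrow> real) set" where
  generator: "g \<in> G \<Longrightarrow> g \<in> function_algebra G"
| const: "(\<lambda>x. c) \<in> function_algebra G"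
| add: "f \<in> function_algebra G \<Longrightarrow> g \<in> function_algebra G \<Longrightarrow> (\<lambda>x. f x + g x) \<in> function_algebra G"
| mult: "f \<in> function_algebra G \<Longrightarrow> g \<in> function_algebra G \<Longrightarrow> (\<lambda>x. f x * g x) \<in> function_algebra G"

lemma function_algebra_derivative_closed:
  assumes "\<And>g. g \<in> G \<Longrightarrow> \<exists>g'\<in>function_algebra G. \<forall>x\<in>S. (g has_real_derivative g' x) (at x)"
    and "f \<in> function_algebra G"
  shows "\<exists>f'\<in>function_algebra G. \<forall>x\<in>S. (f has_real_derivative f' x) (at x)"
  using assms(2)
proof induction
  case (generator g)
  then show ?case by (rule assms(1))
next
  case (const c)
  show ?case by (intro bexI[of _ "\<lambda>x. 0"]) (auto intro: function_algebra.const)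
next
  case (add f g)
  then obtain f' g' where "f' \<in> function_algebra G" "g' \<in> function_algebra G"
    and "\<forall>x\<in>S. (f has_real_derivative f' x) (at x)" "\<forall>x\<in>S. (g has_real_derivative g' x) (at x)"
    by blast
  then show ?case
    by (intro bexI[of _ "\<lambda>x. f' x + g' x"]) (auto intro: function_algebra.add DERIV_add)
next
  case (mult f g)
  then obtain f' g' where "f' \<in> function_algebra G" "g' \<in> function_algebra G"
    and "\<forall>x\<in>S. (f has_real_derivative f' x) (at x)" "\<forall>x\<in>S. (g has_real_derivative g' x) (at x)"
    by blast
  then show ?case
    by (intro bexI[of _ "\<lambda>x. f x * g' x + f' x * g x"])
      (auto intro!: function_algebra.add function_algebra.mult DERIV_mult' mult.hyps)
qed

lemma function_algebra_uminus:
  "f \<in> function_algebra G \<Longrightarrow> (\<lambda>x. - f x) \<in> function_algebra G"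
  using function_algebra.mult[OF function_algebra.const[of "-1"]] by simp

lemma has_real_derivative_one_over_power:
  assumes "x + c \<noteq> 0"
  shows "((\<lambda>y. 1 / (y + c) ^ n) has_real_derivative - real n * (1 / (x + c) ^ Suc n)) (at x)"
proof (cases n)
  case (Suc m)
  have "((\<lambda>y. (y + c) ^ n) has_real_derivative real n * (x + c) ^ m) (at x)"
    using DERIV_power[OF DERIV_add[OF DERIV_ident DERIV_const[of c]], of n] Suc by simp
  from DERIV_inverse_fun[OF this] have "((\<lambda>y. inverse ((y + c) ^ n)) has_real_derivative
          - (real n * (x + c) ^ m * inverse (((x + c) ^ n) ^ Suc (Suc 0)))) (at x)"
    using assms by simp
  moreover have "((x + c) ^ n) ^ Suc (Suc 0) = (x + c) ^ m * (x + c) ^ Suc n"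
    unfolding power_mult[symmetric] power_add[symmetric] using Suc by simp
  then have "- (real n * (x + c) ^ m * inverse (((x + c) ^ n) ^ Suc (Suc 0)))
      = - real n * (1 / (x + c) ^ Suc n)"
    using assms by (simp add: divide_inverse)
  ultimately show ?thesis
    unfolding divide_inverse mult_1_left by (rule DERIV_cong)
qed simp

lemma one_over_power_minus: "1 / (- y) ^ n = (-1) ^ n * (1 / y ^ n)" for y :: real
  by (cases "even n") simp_all

lemma ln_le_half_diff_inverse:
  fixes y :: real
  assumes "1 \<le> y"
  shows "ln y \<le> (y - 1 / y) / 2"
proof -
  have "(\<lambda>t. (t - 1 / t) / 2 - ln t) 1 \<le> (\<lambda>t. (t - 1 / t) / 2 - ln t) y"
  proof (rule deriv_nonneg_imp_mono[where g = "\<lambda>t. (t - 1 / t) / 2 - ln t"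
        and g' = "\<lambda>t. (t - 1)\<^sup>2 / (2 * t\<^sup>2)"])
    fix t :: real assume "t \<in> {1..y}"
    then show "((\<lambda>t. (t - 1 / t) / 2 - ln t) has_real_derivative (t - 1)\<^sup>2 / (2 * t\<^sup>2)) (at t)"
      by (auto intro!: derivative_eq_intros simp: field_simps power2_eq_square)
  qed (use assms in auto)
  then show ?thesis by simp
qed

lemma affine_nonneg_on_positives_iff:
  fixes m c :: real
  shows "(\<forall>x>0. 0 \<le> m * x + c) \<longleftrightarrow> 0 \<le> m \<and> 0 \<le> c"
proof
  assume nonneg: "\<forall>x>0. 0 \<le> m * x + c"
  show "0 \<le> m \<and> 0 \<le> c"
  proof (intro conjI; rule ccontr)
    assume "\<not> 0 \<le> m"
    then have "0 < - m" by simp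
    define x where "x = (\<bar>c\<bar> + 1) / - m"
    have "0 < x" unfolding x_def using \<open>0 < - m\<close> by (intro divide_pos_pos) simp_all
    moreover have "m * x = - (\<bar>c\<bar> + 1)" unfolding x_def using \<open>0 < - m\<close> by (simp add: field_simps)
    then have "m * x + c < 0" by (simp add: abs_if)
    ultimately show False using nonneg by force
  next
    assume "\<not> 0 \<le> c"
    define x where "x = - c / 2 / (\<bar>m\<bar> + 1)"
    have "0 < \<bar>m\<bar> + 1" by simp
    have "0 < x" unfolding x_def using \<open>\<not> 0 \<le> c\<close> by (intro divide_pos_pos) auto
    have "m * x \<le> \<bar>m\<bar> * x" using \<open>0 < x\<close> by (intro mult_right_mono) auto
    also have "\<dots> < (\<bar>m\<bar> + 1) * x" using \<open>0 < x\<close> by simp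
    also have "\<dots> = - c / 2" using \<open>0 < \<bar>m\<bar> + 1\<close> by (simp add: x_def del: divide_divide_eq_left)
    finally have "m * x + c < 0" using \<open>\<not> 0 \<le> c\<close> by simp
    then show False using nonneg \<open>0 < x\<close> by force
  qed
qed simp

lemma power_mixed_le:
  fixes p q :: real
  assumes "0 \<le> p" "p \<le> q"
  shows "q ^ i * p ^ j + p ^ i * q ^ j \<le> q ^ (i + j) + p ^ (i + j)"
proof -
  have "0 \<le> (q ^ i - p ^ i) * (q ^ j - p ^ j)"
    using assms by (intro mult_nonneg_nonneg) (simp_all add: power_mono)
  then show ?thesis by (simp add: power_add algebra_simps)
qed

lemma power_diff_mult_eq_sum:
  fixes p q :: real
  shows "p * q * (q ^ m - p ^ m) = (q - p) * (\<Sum>i<m. q ^ Suc i * p ^ (m - i))"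
proof -
  have "p * q * (q ^ m - p ^ m) = (q - p) * (\<Sum>i<m. p * q * (p ^ (m - Suc i) * q ^ i))"
    by (simp add: power_diff_sumr2 sum_distrib_left ac_simps)
  also have "(\<Sum>i<m. p * q * (p ^ (m - Suc i) * q ^ i)) = (\<Sum>i<m. q ^ Suc i * p ^ (m - i))"
  proof (rule sum.cong)
    fix i assume "i \<in> {..<m}"
    then have "m - i = Suc (m - Suc i)" by simp
    then show "p * q * (p ^ (m - Suc i) * q ^ i) = q ^ Suc i * p ^ (m - i)" by (simp add: ac_simps)
  qed simp
  finally show ?thesis .
qed

lemma mixed_power_sum_ge:
  fixes p q :: real
  assumes "0 \<le> p" "p \<le> q"
  shows "m * p ^ Suc m \<le> (\<Sum>i<m. q ^ Suc i * p ^ (m - i))"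
proof -
  have "(\<Sum>i<m. p ^ Suc m) \<le> (\<Sum>i<m. q ^ Suc i * p ^ (m - i))"
  proof (rule sum_mono)
    fix i assume "i \<in> {..<m}"
    then have "p ^ Suc m = p ^ Suc i * p ^ (m - i)" by (simp flip: power_add)
    also have "\<dots> \<le> q ^ Suc i * p ^ (m - i)" using assms by (intro mult_right_mono power_mono) auto
    finally show "p ^ Suc m \<le> q ^ Suc i * p ^ (m - i)" .
  qed
  then show ?thesis by simp
qed

lemma mixed_power_sum_le:
  fixes p q :: real
  assumes "0 \<le> p" "p \<le> q"
  shows "2 * (\<Sum>i<m. q ^ Suc i * p ^ (m - i)) \<le> m * (q ^ Suc m + p ^ Suc m)"
proof -
  define t where "t i = q ^ Suc i * p ^ (m - i)" for i
  have "2 * (\<Sum>i<m. t i) = (\<Sum>i<m. t i + t (m - Suc i))"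
    by (simp add: sum.distrib sum.nat_diff_reindex)
  also have "\<dots> \<le> (\<Sum>i<m. q ^ Suc m + p ^ Suc m)"
  proof (rule sum_mono)
    fix i assume "i \<in> {..<m}"
    then have "Suc i + (m - i) = Suc m" "m - Suc i + 1 = m - i" "m - (m - Suc i) = Suc i" by auto
    then show "t i + t (m - Suc i) \<le> q ^ Suc m + p ^ Suc m"
      using power_mixed_le[OF assms, of "Suc i" "m - i"] by (simp add: t_def ac_simps)
  qed
  finally show ?thesis by (simp add: t_def)
qed

section \<open>The derivatives of \<open>ln F\<close>\<close>

definition F_domain :: "real \<Rightarrow> real set" where
  "F_domain a = {x. 0 < x * (x + a)}"

lemma F_domainD:
  assumes "x \<in> F_domain a"
  shows "x \<noteq> 0" and "x + a \<noteq> 0" and "0 < 1 + a / x"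
proof -
  show "x \<noteq> 0" "x + a \<noteq> 0" using assms by (auto simp: F_domain_def)
  then have "1 + a / x = x * (x + a) / x^2" by (simp add: field_simps power2_eq_square)
  then show "0 < 1 + a / x" using assms \<open>x \<noteq> 0\<close> by (simp add: F_domain_def)
qed

lemma open_F_domain: "open (F_domain a)"
  unfolding F_domain_def by (intro open_Collect_less continuous_intros)

lemma F_pos:
  assumes "x \<in> F_domain a"
  shows "0 < F a b x"
  using F_domainD(3)[OF assms] by (simp add: F_def)

fun log_ratio_deriv :: "real \<Rightarrow> nat \<Rightarrow> real \<Rightarrow> real" where
  "log_ratio_deriv a 0 = (\<lambda>x. ln (1 + a / x))"
| "log_ratio_deriv a (Suc j) = (\<lambda>x. (-1) ^ j * fact j * (1 / (x + a) ^ Suc j - 1 / x ^ Suc j))"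

lemma has_real_derivative_log_ratio_deriv:
  assumes "x \<in> F_domain a"
  shows "(log_ratio_deriv a j has_real_derivative log_ratio_deriv a (Suc j) x) (at x)"
proof (cases j)
  case 0
  then show ?thesis
    using F_domainD[OF assms] by (auto intro!: derivative_eq_intros simp: field_simps power2_eq_square)
next
  case (Suc i)
  have "((\<lambda>y. 1 / (y + a) ^ Suc i) has_real_derivative - real (Suc i) * (1 / (x + a) ^ Suc (Suc i))) (at x)"
    using F_domainD(2)[OF assms] by (rule has_real_derivative_one_over_power)
  moreover have "((\<lambda>y. 1 / y ^ Suc i) has_real_derivative - real (Suc i) * (1 / x ^ Suc (Suc i))) (at x)"
    using has_real_derivative_one_over_power[of x 0 "Suc i"] F_domainD(1)[OF assms] by simp
  ultimately have "((\<lambda>y. (-1) ^ i * fact i * (1 / (y + a) ^ Suc i - 1 / y ^ Suc i)) has_real_derivative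
      (-1) ^ i * fact i * (- real (Suc i) * (1 / (x + a) ^ Suc (Suc i)) - - real (Suc i) * (1 / x ^ Suc (Suc i)))) (at x)"
    by (intro DERIV_cmult DERIV_diff)
  moreover have "(-1) ^ i * fact i * (- real (Suc i) * A - - real (Suc i) * B)
      = (-1) ^ Suc i * fact (Suc i) * (A - B)" for A B :: real
    by (simp add: fact_Suc algebra_simps)
  ultimately show ?thesis
    unfolding Suc log_ratio_deriv.simps by (rule DERIV_cong)
qed

lemma log_ratio_deriv_reflect: "log_ratio_deriv (-a) j (-x) = (-1) ^ j * log_ratio_deriv a j x"
proof (cases j)
  case (Suc i)
  have "- x + - a = - (x + a)" by simp
  then show ?thesis
    using Suc by (simp only: log_ratio_deriv.simps one_over_power_minus) (simp add: algebra_simps)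
qed simp

lemma log_ratio_deriv_translate:
  assumes "x \<in> F_domain a"
  shows "log_ratio_deriv (-a) j (x + a) = - log_ratio_deriv a j x"
proof (cases j)
  case 0
  have "1 + - a / (x + a) = inverse (1 + a / x)"
    using F_domainD[OF assms] by (simp add: field_simps)
  then show ?thesis using 0 F_domainD[OF assms] by (simp add: ln_inverse)
qed (simp add: algebra_simps)

text \<open>The \<open>k\<close>-th derivative of \<open>ln (F a b x) = (x + b) ln (1 + a/x)\<close> by the Leibniz rule;
  at \<open>k = 0\<close> the truncated \<open>k - 1\<close> is harmless because it is multiplied by \<open>k\<close>.\<close>

definition log_F_deriv :: "real \<Rightarrow> real \<Rightarrow> nat \<Rightarrow> real \<Rightarrow> real" where
  "log_F_deriv a b k x = (x + b) * log_ratio_deriv a k x + k * log_ratio_deriv a (k - 1) x"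

lemma has_real_derivative_log_F_deriv:
  assumes "x \<in> F_domain a"
  shows "(log_F_deriv a b k has_real_derivative log_F_deriv a b (Suc k) x) (at x)"
proof -
  have leibniz: "log_F_deriv a b k = (\<lambda>y. (y + b) * log_ratio_deriv a k y + k * log_ratio_deriv a (k - 1) y)"
    by (simp add: log_F_deriv_def fun_eq_iff)
  have "((\<lambda>y. (y + b) * log_ratio_deriv a k y + k * log_ratio_deriv a (k - 1) y) has_real_derivative
      1 * log_ratio_deriv a k x + (x + b) * log_ratio_deriv a (Suc k) x
        + k * log_ratio_deriv a (Suc (k - 1)) x) (at x)"
    using has_real_derivative_log_ratio_deriv[OF assms]
    by (intro DERIV_add DERIV_mult' DERIV_cmult) (auto intro!: derivative_eq_intros simp del: log_ratio_deriv.simps)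
  moreover have "1 * log_ratio_deriv a k x + (x + b) * log_ratio_deriv a (Suc k) x
        + k * log_ratio_deriv a (Suc (k - 1)) x = log_F_deriv a b (Suc k) x"
    by (cases k) (simp_all del: log_ratio_deriv.simps add: log_F_deriv_def algebra_simps)
  ultimately show ?thesis unfolding leibniz by (rule DERIV_cong)
qed

lemma log_F_deriv_reflect: "log_F_deriv (-a) (-b) k (-x) = (-1) ^ Suc k * log_F_deriv a b k x"
  unfolding log_F_deriv_def log_ratio_deriv_reflect
  by (cases k) (simp_all del: log_ratio_deriv.simps add: algebra_simps)

lemma log_F_deriv_translate:
  assumes "x \<in> F_domain a"
  shows "log_F_deriv (-a) (b - a) k (x + a) = - log_F_deriv a b k x"
  unfolding log_F_deriv_def log_ratio_deriv_translate[OF assms] by (simp add: algebra_simps)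

lemma ln_F:
  assumes "x \<in> F_domain a"
  shows "ln (F a b x) = log_F_deriv a b 0 x"
  using F_domainD(3)[OF assms] by (simp add: F_def log_F_deriv_def)

lemma has_real_derivative_F:
  assumes "x \<in> F_domain a"
  shows "(F a b has_real_derivative F a b x * log_F_deriv a b 1 x) (at x)"
proof -
  have exp_ln_F: "exp (log_F_deriv a b 0 y) = F a b y" if "y \<in> F_domain a" for y
    using that by (simp add: ln_F[symmetric] F_pos)
  have "((\<lambda>y. exp (log_F_deriv a b 0 y)) has_real_derivative
      exp (log_F_deriv a b 0 x) * log_F_deriv a b 1 x) (at x)"
    using has_real_derivative_log_F_deriv[OF assms, of b 0] by (intro DERIV_chain2[OF DERIV_exp]) simp
  then have "((\<lambda>y. exp (log_F_deriv a b 0 y)) has_real_derivative F a b x * log_F_deriv a b 1 x) (at x)"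
    by (simp only: exp_ln_F[OF assms])
  then show ?thesis
    by (rule has_field_derivative_transform_within_open[OF _ open_F_domain assms]) (rule exp_ln_F)
qed

lemma has_real_derivative_inverse_F:
  assumes "x \<in> F_domain a"
  shows "((\<lambda>y. 1 / F a b y) has_real_derivative 1 / F a b x * - log_F_deriv a b 1 x) (at x)"
proof -
  have "((\<lambda>y. inverse (F a b y)) has_real_derivative
      - (F a b x * log_F_deriv a b 1 x * inverse (F a b x ^ Suc (Suc 0)))) (at x)"
    using F_pos[OF assms, of b] by (intro DERIV_inverse_fun has_real_derivative_F assms) simp
  moreover have "- (F a b x * log_F_deriv a b 1 x * inverse (F a b x ^ Suc (Suc 0)))
      = inverse (F a b x) * - log_F_deriv a b 1 x"
    using F_pos[OF assms, of b] by (simp add: power2_eq_square)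
  ultimately show ?thesis unfolding divide_inverse mult_1_left by (rule DERIV_cong)
qed

lemma smooth_on_F:
  assumes "open I" and "I \<subseteq> F_domain a"
  shows "smooth_on (F a b) I" and "smooth_on (\<lambda>x. 1 / F a b x) I"
proof -
  define G where "G = insert (\<lambda>x. x) (insert (F a b) (insert (\<lambda>x. 1 / F a b x) (range (log_ratio_deriv a))))"
  have generators: "F a b \<in> function_algebra G" "(\<lambda>x. 1 / F a b x) \<in> function_algebra G"
    by (auto simp: G_def intro: function_algebra.generator)
  have "log_F_deriv a b 1 = (\<lambda>x. (x + b) * log_ratio_deriv a 1 x + 1 * log_ratio_deriv a 0 x)"
    by (simp add: fun_eq_iff log_F_deriv_def del: log_ratio_deriv.simps)
  also have "\<dots> \<in> function_algebra G"
    by (intro function_algebra.add function_algebra.mult function_algebra.const function_algebra.generator)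
      (auto simp: G_def simp del: log_ratio_deriv.simps)
  finally have E1: "log_F_deriv a b 1 \<in> function_algebra G" .
  have witness: "\<exists>g'\<in>function_algebra G. \<forall>x\<in>I. (g has_real_derivative g' x) (at x)"
    if "\<And>x. x \<in> F_domain a \<Longrightarrow> (g has_real_derivative g' x) (at x)" and "g' \<in> function_algebra G"
    for g g'
    using that assms(2) by blast
  have "\<exists>g'\<in>function_algebra G. \<forall>x\<in>I. (g has_real_derivative g' x) (at x)" if "g \<in> G" for g
  proof -
    from that consider "g = (\<lambda>x. x)" | "g = F a b" | "g = (\<lambda>x. 1 / F a b x)"
      | j where "g = log_ratio_deriv a j"
      unfolding G_def by blast
    then show ?thesis
    proof cases
      case 1
      show ?thesis unfolding 1 by (rule witness[OF DERIV_ident function_algebra.const])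
    next
      case 2
      show ?thesis unfolding 2
        by (rule witness[OF has_real_derivative_F function_algebra.mult[OF generators(1) E1]])
    next
      case 3
      show ?thesis unfolding 3
        by (rule witness[OF has_real_derivative_inverse_F
              function_algebra.mult[OF generators(2) function_algebra_uminus[OF E1]]])
    next
      case (4 j)
      have "log_ratio_deriv a (Suc j) \<in> function_algebra G"
        by (auto simp: G_def simp del: log_ratio_deriv.simps intro: function_algebra.generator)
      with has_real_derivative_log_ratio_deriv show ?thesis unfolding 4 by (rule witness)
    qed
  qed
  then have "\<exists>f'\<in>function_algebra G. \<forall>x\<in>I. (f has_real_derivative f' x) (at x)"
    if "f \<in> function_algebra G" for f
    using that by (rule function_algebra_derivative_closed)
  then show "smooth_on (F a b) I" and "smooth_on (\<lambda>x. 1 / F a b x) I"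
    using generators by (auto intro: smooth_onI_derivative_closed[OF assms(1)])
qed

section \<open>Signs of the derivatives of \<open>ln F\<close>\<close>

text \<open>Up to the factor \<open>(-1)\<^sup>m\<^sup>+\<^sup>1 (m - 1)!\<close>, \<open>(x (x + a))\<^sup>m\<^sup>+\<^sup>1\<close> times the \<open>(m + 1)\<close>-th derivative
  of \<open>ln F\<close>, written in \<open>p = x\<close> and \<open>q = x + a\<close> (see \<open>log_F_deriv_eq_numerator\<close>).\<close>

definition log_F_numerator :: "nat \<Rightarrow> real \<Rightarrow> real \<Rightarrow> real \<Rightarrow> real" where
  "log_F_numerator m p q b = p * q * (p ^ m - q ^ m) + m * (q - p) * p ^ Suc m + m * b * (q ^ Suc m - p ^ Suc m)"

lemma log_F_numerator_eq_sum:
  "log_F_numerator m p q b = (q - p) * (m * p ^ Suc m - (\<Sum>i<m. q ^ Suc i * p ^ (m - i)))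
     + m * b * (q ^ Suc m - p ^ Suc m)"
proof -
  have "p * q * (p ^ m - q ^ m) = - ((q - p) * (\<Sum>i<m. q ^ Suc i * p ^ (m - i)))"
    by (metis minus_diff_eq mult_minus_right power_diff_mult_eq_sum)
  then show ?thesis unfolding log_F_numerator_def by (simp add: algebra_simps)
qed

lemma log_F_numerator_nonpos:
  assumes "0 \<le> p" "p \<le> q" "b \<le> 0"
  shows "log_F_numerator m p q b \<le> 0"
proof -
  have "(q - p) * (m * p ^ Suc m - (\<Sum>i<m. q ^ Suc i * p ^ (m - i))) \<le> 0"
    using assms mixed_power_sum_ge[OF assms(1,2), of m] by (intro mult_nonneg_nonpos) auto
  moreover have "p ^ Suc m \<le> q ^ Suc m" using assms by (intro power_mono) auto
  then have "m * b * (q ^ Suc m - p ^ Suc m) \<le> 0"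
    using assms by (intro mult_nonpos_nonneg mult_nonneg_nonpos) auto
  ultimately show ?thesis by (simp add: log_F_numerator_eq_sum)
qed

lemma log_F_numerator_nonneg:
  assumes "0 \<le> p" "p \<le> q" "q - p \<le> 2 * b"
  shows "0 \<le> log_F_numerator m p q b"
proof -
  define S where "S = (\<Sum>i<m. q ^ Suc i * p ^ (m - i))"
  have "p ^ Suc m \<le> q ^ Suc m" using assms by (intro power_mono) auto
  then have "m * ((q - p) / 2) * (q ^ Suc m - p ^ Suc m) \<le> m * b * (q ^ Suc m - p ^ Suc m)"
    using assms by (intro mult_right_mono mult_left_mono) auto
  then have "(q - p) * (m * (q ^ Suc m + p ^ Suc m) - 2 * S) / 2 \<le> log_F_numerator m p q b"
    unfolding log_F_numerator_eq_sum S_def[symmetric] by (simp add: field_simps)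
  moreover have "0 \<le> (q - p) * (m * (q ^ Suc m + p ^ Suc m) - 2 * S)"
    using assms mixed_power_sum_le[OF assms(1,2), of m] by (intro mult_nonneg_nonneg) (auto simp: S_def)
  ultimately show ?thesis by linarith
qed

lemma log_F_deriv_eq_numerator:
  assumes "x \<in> F_domain a"
  shows "(-1) ^ n * log_F_deriv a b (Suc (Suc n)) x * (x * (x + a)) ^ Suc (Suc n)
    = fact n * log_F_numerator (Suc n) x (x + a) b"
proof -
  define q P Q where "q = x + a" and "P = x ^ Suc n" and "Q = q ^ Suc n"
  have "x \<noteq> 0" "q \<noteq> 0" using F_domainD[OF assms] by (simp_all add: q_def)
  then have "P \<noteq> 0" "Q \<noteq> 0" by (simp_all add: P_def Q_def)
  have L: "log_ratio_deriv a (Suc (Suc n)) x = (-1) ^ Suc n * fact (Suc n) * (1 / (q * Q) - 1 / (x * P))"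
    "log_ratio_deriv a (Suc n) x = (-1) ^ n * fact n * (1 / Q - 1 / P)"
    by (simp_all add: q_def P_def Q_def)
  have "(x + b) * ((-1) ^ Suc n * fact (Suc n) * X) + real (Suc (Suc n)) * ((-1) ^ n * fact n * Y)
      = (-1) ^ n * (fact n * ((n + 2) * Y - (n + 1) * (x + b) * X))" for X Y :: real
    by (simp add: fact_Suc algebra_simps)
  then have E: "(-1) ^ n * log_F_deriv a b (Suc (Suc n)) x
      = fact n * ((n + 2) * (1 / Q - 1 / P) - (n + 1) * (x + b) * (1 / (q * Q) - 1 / (x * P)))"
    unfolding log_F_deriv_def diff_Suc_1 L by simp
  have W: "(x * (x + a)) ^ Suc (Suc n) = (x * P) * (q * Q)"
    by (simp add: q_def P_def Q_def power_mult_distrib)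
  have N: "log_F_numerator (Suc n) x (x + a) b
      = x * q * (P - Q) + (n + 1) * (q - x) * (x * P) + (n + 1) * b * (q * Q - x * P)"
    by (simp add: log_F_numerator_def q_def P_def Q_def)
  have "fact n * ((n + 2) * (1 / Q - 1 / P) - (n + 1) * (x + b) * (1 / (q * Q) - 1 / (x * P)))
      * ((x * P) * (q * Q))
    = fact n * (x * q * (P - Q) + (n + 1) * (q - x) * (x * P) + (n + 1) * b * (q * Q - x * P))"
    using \<open>x \<noteq> 0\<close> \<open>q \<noteq> 0\<close> \<open>P \<noteq> 0\<close> \<open>Q \<noteq> 0\<close> by (simp add: field_simps)
  then show ?thesis unfolding E W N .
qed

lemma log_F_deriv_one:
  assumes "x \<in> F_domain a"
  shows "log_F_deriv a b 1 x = ln (1 + a / x) - (x + b) * a / (x * (x + a))"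
  using F_domainD[OF assms] by (simp add: log_F_deriv_def field_simps)

lemma log_F_deriv_one_nonneg:
  assumes "0 < a" "0 < x" "b \<le> 0"
  shows "0 \<le> log_F_deriv a b 1 x"
proof -
  have dom: "x \<in> F_domain a" using assms by (simp add: F_domain_def)
  have "x + a \<noteq> 0" using assms by simp
  have "(x + b) * a / (x * (x + a)) \<le> x * a / (x * (x + a))"
    using assms by (intro divide_right_mono mult_right_mono) auto
  also have "\<dots> = a / (x + a)" using assms by simp
  also have "\<dots> = - (x / (x + a) - 1)" using \<open>x + a \<noteq> 0\<close> by (simp add: field_simps)
  also have "\<dots> \<le> - ln (x / (x + a))" using ln_le_minus_one[of "x / (x + a)"] assms by simp
  also have "\<dots> = ln (1 + a / x)" using assms by (simp add: ln_div field_simps)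
  finally show ?thesis unfolding log_F_deriv_one[OF dom] by simp
qed

lemma log_F_deriv_one_nonpos:
  assumes "0 < a" "0 < x" "a \<le> 2 * b"
  shows "log_F_deriv a b 1 x \<le> 0"
proof -
  have dom: "x \<in> F_domain a" using assms by (simp add: F_domain_def)
  have "ln (1 + a / x) \<le> ((1 + a / x) - 1 / (1 + a / x)) / 2"
    using assms by (intro ln_le_half_diff_inverse) simp
  also have "\<dots> = (x + a / 2) * a / (x * (x + a))" using assms by (simp add: field_simps power2_eq_square)
  also have "\<dots> \<le> (x + b) * a / (x * (x + a))"
    using assms by (intro divide_right_mono mult_right_mono) auto
  finally show ?thesis unfolding log_F_deriv_one[OF dom] by simp
qed

section \<open>Logarithmic monotonicity of \<open>F\<close> and \<open>1/F\<close>\<close>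

text \<open>The sign conditions for \<open>F a b\<close> (\<open>s = 1\<close>) or \<open>1 / F a b\<close> (\<open>s = -1\<close>) to be logarithmically
  completely monotonic on \<open>I\<close>.\<close>

definition log_F_cm_condition :: "real \<Rightarrow> real \<Rightarrow> real \<Rightarrow> real set \<Rightarrow> bool" where
  "log_F_cm_condition a b s I \<longleftrightarrow> (\<forall>k\<ge>1. \<forall>x\<in>I. 0 \<le> (-1) ^ k * (s * log_F_deriv a b k x))"

lemma log_monotonic_iff_log_F_cm_condition:
  assumes "open I" and "I \<subseteq> F_domain a" and "smooth_on \<Phi> I" and "\<forall>x\<in>I. 0 < \<Phi> x"
    and ln_\<Phi>: "\<forall>x\<in>I. ln (\<Phi> x) = s * ln (F a b x)"
  shows "log_completely_monotonic_on \<Phi> I \<longleftrightarrow> log_F_cm_condition a b s I"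
    and "log_absolutely_monotonic_on \<Phi> I \<longleftrightarrow> log_F_cm_condition (-a) (-b) (-s) (uminus ` I)"
proof -
  have D: "(deriv ^^ k) (\<lambda>y. ln (\<Phi> y)) x = s * log_F_deriv a b k x" if "x \<in> I" for k x
    using that assms(2) ln_\<Phi>
    by (intro iterated_deriv_eqI[OF assms(1)])
      (auto simp: ln_F intro!: DERIV_cmult has_real_derivative_log_F_deriv)
  show "log_completely_monotonic_on \<Phi> I \<longleftrightarrow> log_F_cm_condition a b s I"
    using assms(3,4) by (simp add: log_completely_monotonic_on_def log_F_cm_condition_def D)
  have reflect: "(-1) ^ k * (- s * log_F_deriv (-a) (-b) k (- x)) = s * log_F_deriv a b k x" for k x
    by (simp add: log_F_deriv_reflect)
  show "log_absolutely_monotonic_on \<Phi> I \<longleftrightarrow> log_F_cm_condition (-a) (-b) (-s) (uminus ` I)"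
    unfolding log_absolutely_monotonic_on_def log_F_cm_condition_def Ball_image_comp comp_def reflect
    using assms(3,4) by (simp add: D)
qed

lemma log_monotonic_F_iff:
  assumes "open I" and "I \<subseteq> F_domain a"
  shows "log_completely_monotonic_on (F a b) I \<longleftrightarrow> log_F_cm_condition a b 1 I"
    and "log_completely_monotonic_on (\<lambda>x. 1 / F a b x) I \<longleftrightarrow> log_F_cm_condition a b (-1) I"
    and "log_absolutely_monotonic_on (F a b) I \<longleftrightarrow> log_F_cm_condition (-a) (-b) (-1) (uminus ` I)"
    and "log_absolutely_monotonic_on (\<lambda>x. 1 / F a b x) I \<longleftrightarrow> log_F_cm_condition (-a) (-b) 1 (uminus ` I)"
proof -
  have pos: "\<forall>x\<in>I. 0 < F a b x" using assms(2) F_pos by blast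
  then have pos_inverse: "\<forall>x\<in>I. 0 < 1 / F a b x" by simp
  have ln_F_eq: "\<forall>x\<in>I. ln (F a b x) = 1 * ln (F a b x)" by simp
  have ln_inverse_F: "\<forall>x\<in>I. ln (1 / F a b x) = -1 * ln (F a b x)" using pos by (simp add: ln_div)
  show "log_completely_monotonic_on (F a b) I \<longleftrightarrow> log_F_cm_condition a b 1 I"
    and "log_absolutely_monotonic_on (F a b) I \<longleftrightarrow> log_F_cm_condition (-a) (-b) (-1) (uminus ` I)"
    by (rule log_monotonic_iff_log_F_cm_condition[OF assms smooth_on_F(1)[OF assms] pos ln_F_eq])+
  show "log_completely_monotonic_on (\<lambda>x. 1 / F a b x) I \<longleftrightarrow> log_F_cm_condition a b (-1) I"
    and "log_absolutely_monotonic_on (\<lambda>x. 1 / F a b x) I \<longleftrightarrow> log_F_cm_condition (-a) (-b) 1 (uminus ` I)"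
    using log_monotonic_iff_log_F_cm_condition[OF assms smooth_on_F(2)[OF assms] pos_inverse ln_inverse_F]
    by simp_all
qed

lemma log_F_cm_condition_second_deriv:
  assumes "log_F_cm_condition a b s I" and "x \<in> I" and "x \<in> F_domain a"
  shows "0 \<le> s * (a * ((2 * b - a) * x + a * b))"
proof -
  have "0 \<le> s * log_F_deriv a b 2 x"
    using assms(1,2) by (auto simp: log_F_cm_condition_def dest: spec[of _ 2])
  moreover have "0 \<le> (x * (x + a)) ^ 2" by simp
  ultimately have "0 \<le> s * log_F_deriv a b 2 x * (x * (x + a)) ^ 2" by (rule mult_nonneg_nonneg)
  also have "\<dots> = s * (log_F_deriv a b 2 x * (x * (x + a)) ^ 2)" by (rule mult.assoc)
  also have "log_F_deriv a b 2 x * (x * (x + a)) ^ 2 = log_F_numerator 1 x (x + a) b"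
    using log_F_deriv_eq_numerator[OF assms(3), of 0 b] by (simp add: numeral_2_eq_2)
  also have "log_F_numerator 1 x (x + a) b = a * ((2 * b - a) * x + a * b)"
    by (simp add: log_F_numerator_def power2_eq_square algebra_simps)
  finally show ?thesis .
qed

lemma log_F_cm_conditionI:
  assumes "I \<subseteq> F_domain a"
    and first: "\<And>x. x \<in> I \<Longrightarrow> s * log_F_deriv a b 1 x \<le> 0"
    and higher: "\<And>m x. x \<in> I \<Longrightarrow> 0 \<le> s * log_F_numerator (Suc m) x (x + a) b"
  shows "log_F_cm_condition a b s I"
  unfolding log_F_cm_condition_def
proof (intro allI impI ballI)
  fix k :: nat and x assume "1 \<le> k" "x \<in> I"
  then obtain n where k: "k = Suc n" by (cases k) auto
  show "0 \<le> (-1) ^ k * (s * log_F_deriv a b k x)"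
  proof (cases n)
    case 0
    then show ?thesis using first[OF \<open>x \<in> I\<close>] k by simp
  next
    case (Suc m)
    have dom: "x \<in> F_domain a" using \<open>x \<in> I\<close> assms(1) by blast
    then have W: "0 < (x * (x + a)) ^ Suc (Suc m)" by (intro zero_less_power) (simp add: F_domain_def)
    have "(-1) ^ k * (s * log_F_deriv a b k x) * (x * (x + a)) ^ Suc (Suc m)
        = s * ((-1) ^ m * log_F_deriv a b (Suc (Suc m)) x * (x * (x + a)) ^ Suc (Suc m))"
      by (simp add: k Suc mult_ac)
    also have "\<dots> = fact m * (s * log_F_numerator (Suc m) x (x + a) b)"
      unfolding log_F_deriv_eq_numerator[OF dom] by (rule mult.left_commute)
    finally have "(-1) ^ k * (s * log_F_deriv a b k x) * (x * (x + a)) ^ Suc (Suc m)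
        = fact m * (s * log_F_numerator (Suc m) x (x + a) b)" .
    moreover have "0 \<le> fact m * (s * log_F_numerator (Suc m) x (x + a) b)"
      using higher[OF \<open>x \<in> I\<close>] by simp
    ultimately have "0 \<le> (-1) ^ k * (s * log_F_deriv a b k x) * (x * (x + a)) ^ Suc (Suc m)"
      by (simp only:)
    with W show ?thesis by (metis zero_le_mult_iff not_le)
  qed
qed

lemma log_F_cm_condition_positive_halfline:
  assumes "0 < a"
  shows "log_F_cm_condition a b 1 {0<..} \<longleftrightarrow> a \<le> 2 * b"
    and "log_F_cm_condition a b (-1) {0<..} \<longleftrightarrow> b \<le> 0"
proof -
  have dom: "{0<..} \<subseteq> F_domain a" using assms by (auto simp: F_domain_def)
  have necessary: "\<forall>x>0. 0 \<le> (s * (2 * b - a)) * x + s * (a * b)"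
    if "log_F_cm_condition a b s {0<..}" for s
  proof (intro allI impI)
    fix x :: real assume "0 < x"
    then have "0 \<le> s * (a * ((2 * b - a) * x + a * b))"
      using dom by (intro log_F_cm_condition_second_deriv[OF that]) auto
    then have "0 \<le> s * ((2 * b - a) * x + a * b)"
      using assms by (simp add: mult.left_commute[of s] zero_le_mult_iff)
    then show "0 \<le> (s * (2 * b - a)) * x + s * (a * b)"
      by (simp add: algebra_simps)
  qed
  show "log_F_cm_condition a b 1 {0<..} \<longleftrightarrow> a \<le> 2 * b"
  proof
    assume "log_F_cm_condition a b 1 {0<..}"
    then have "0 \<le> 1 * (2 * b - a) \<and> 0 \<le> 1 * (a * b)"
      using necessary unfolding affine_nonneg_on_positives_iff by blast
    then show "a \<le> 2 * b" by simp
  next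
    assume "a \<le> 2 * b"
    show "log_F_cm_condition a b 1 {0<..}"
    proof (rule log_F_cm_conditionI[OF dom])
      fix x :: real assume "x \<in> {0<..}"
      then show "1 * log_F_deriv a b 1 x \<le> 0"
        using log_F_deriv_one_nonpos[OF assms _ \<open>a \<le> 2 * b\<close>] by simp
      show "0 \<le> 1 * log_F_numerator (Suc m) x (x + a) b" for m
        using \<open>x \<in> {0<..}\<close> assms \<open>a \<le> 2 * b\<close> by (simp add: log_F_numerator_nonneg)
    qed
  qed
  show "log_F_cm_condition a b (-1) {0<..} \<longleftrightarrow> b \<le> 0"
  proof
    assume "log_F_cm_condition a b (-1) {0<..}"
    then have "0 \<le> -1 * (2 * b - a) \<and> 0 \<le> -1 * (a * b)"
      using necessary unfolding affine_nonneg_on_positives_iff by blast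
    then show "b \<le> 0" using assms by (simp add: mult_le_0_iff)
  next
    assume "b \<le> 0"
    show "log_F_cm_condition a b (-1) {0<..}"
    proof (rule log_F_cm_conditionI[OF dom])
      fix x :: real assume "x \<in> {0<..}"
      then show "-1 * log_F_deriv a b 1 x \<le> 0"
        using log_F_deriv_one_nonneg[OF assms _ \<open>b \<le> 0\<close>] by simp
      show "0 \<le> -1 * log_F_numerator (Suc m) x (x + a) b" for m
        using \<open>x \<in> {0<..}\<close> assms \<open>b \<le> 0\<close> by (simp add: log_F_numerator_nonpos)
    qed
  qed
qed

lemma log_F_cm_condition_translate:
  assumes "a < 0"
  shows "log_F_cm_condition a b s {-a<..} \<longleftrightarrow> log_F_cm_condition (-a) (b - a) (-s) {0<..}"
proof -
  have shift: "(-1) ^ k * (- s * log_F_deriv (-a) (b - a) k (x + a)) = (-1) ^ k * (s * log_F_deriv a b k x)"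
    if "-a < x" for k x
  proof -
    have "x \<in> F_domain a" using that assms by (auto simp: F_domain_def)
    then show ?thesis by (simp add: log_F_deriv_translate)
  qed
  show ?thesis
    unfolding log_F_cm_condition_def
  proof (intro iffI allI impI ballI)
    fix k :: nat and y :: real
    assume "\<forall>k\<ge>1. \<forall>x\<in>{-a<..}. 0 \<le> (-1) ^ k * (s * log_F_deriv a b k x)" "1 \<le> k" "y \<in> {0<..}"
    moreover have "y - a \<in> {-a<..}" using \<open>y \<in> {0<..}\<close> by simp
    ultimately have "0 \<le> (-1) ^ k * (s * log_F_deriv a b k (y - a))" by blast
    then show "0 \<le> (-1) ^ k * (- s * log_F_deriv (-a) (b - a) k y)"
      using shift[of "y - a" k] \<open>y \<in> {0<..}\<close> by simp
  next
    fix k :: nat and x :: real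
    assume "\<forall>k\<ge>1. \<forall>y\<in>{0<..}. 0 \<le> (-1) ^ k * (- s * log_F_deriv (-a) (b - a) k y)" "1 \<le> k"
      "x \<in> {-a<..}"
    moreover have "x + a \<in> {0<..}" using \<open>x \<in> {-a<..}\<close> by simp
    ultimately have "0 \<le> (-1) ^ k * (- s * log_F_deriv (-a) (b - a) k (x + a))" by blast
    then show "0 \<le> (-1) ^ k * (s * log_F_deriv a b k x)"
      using shift[of x k] \<open>x \<in> {-a<..}\<close> by simp
  qed
qed

theorem theorem1p2:
  fixes \<alpha> \<beta> :: real
  assumes "\<alpha> \<noteq> 0"
  shows
   "(\<alpha> < 0 \<longrightarrow>
      (log_completely_monotonic_on (F \<alpha> \<beta>) {-\<alpha><..} \<longleftrightarrow> \<beta> \<le> \<alpha>) \<and>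
      (log_completely_monotonic_on (\<lambda>x. 1 / F \<alpha> \<beta> x) {-\<alpha><..} \<longleftrightarrow> 2 * \<beta> \<ge> \<alpha>)) \<and>
    (\<alpha> > 0 \<longrightarrow>
      (log_completely_monotonic_on (F \<alpha> \<beta>) {0<..} \<longleftrightarrow> 2 * \<beta> \<ge> \<alpha>) \<and>
      (log_completely_monotonic_on (\<lambda>x. 1 / F \<alpha> \<beta> x) {0<..} \<longleftrightarrow> \<beta> \<le> 0)) \<and>
    (\<alpha> < 0 \<longrightarrow>
      (log_absolutely_monotonic_on (F \<alpha> \<beta>) {..<0} \<longleftrightarrow> \<beta> \<ge> 0) \<and>
      (log_absolutely_monotonic_on (\<lambda>x. 1 / F \<alpha> \<beta> x) {..<0} \<longleftrightarrow> 2 * \<beta> \<le> \<alpha>)) \<and>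
    (\<alpha> > 0 \<longrightarrow>
      (log_absolutely_monotonic_on (F \<alpha> \<beta>) {..<-\<alpha>} \<longleftrightarrow> 2 * \<beta> \<le> \<alpha>) \<and>
      (log_absolutely_monotonic_on (\<lambda>x. 1 / F \<alpha> \<beta> x) {..<-\<alpha>} \<longleftrightarrow> \<beta> \<ge> \<alpha>))"
proof (cases "\<alpha> < 0")
  case True
  have "{-\<alpha><..} \<subseteq> F_domain \<alpha>" and "{..<0} \<subseteq> F_domain \<alpha>"
    using True by (auto simp: F_domain_def zero_less_mult_iff)
  with True show ?thesis
    using log_monotonic_F_iff[of "{-\<alpha><..}" \<alpha> \<beta>] log_monotonic_F_iff[of "{..<0}" \<alpha> \<beta>]
      log_F_cm_condition_translate[OF True] log_F_cm_condition_positive_halfline[of "-\<alpha>"]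
    by auto
next
  case False
  with assms have "0 < \<alpha>" by simp
  have "{0<..} \<subseteq> F_domain \<alpha>" and "{..<-\<alpha>} \<subseteq> F_domain \<alpha>"
    using \<open>0 < \<alpha>\<close> by (auto simp: F_domain_def zero_less_mult_iff)
  with \<open>0 < \<alpha>\<close> show ?thesis
    using log_monotonic_F_iff[of "{0<..}" \<alpha> \<beta>] log_monotonic_F_iff[of "{..<-\<alpha>}" \<alpha> \<beta>]
      log_F_cm_condition_translate[of "-\<alpha>"] log_F_cm_condition_positive_halfline[of \<alpha>]
    by auto
qed

end
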